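(* Let $C$ be a conformal algebra satisfying a pseudo-identity $\sum_{\sigma\in S_n}(\sigma\otimes_H\mathrm{id}_C)\,t^*_\sigma(a_{1\sigma},\dots,a_{n\sigma})=0$ for all $a_1,\dots,a_n\in C$ (where each $t_\sigma$ is a linear combination of bracketings of an $n$-letter word). Let $\pi=(m_1,\dots,m_n)$ be positive integers, $G_i\in H^{\otimes m_i}$, $a_i\in C$ and $A_i=G_i\otimes_H a_i\in H^{\otimes m_i}\otimes_H C$. Then, for the expanded pseudoproduct, $$\sum_{\sigma\in S_n}(\sigma_\pi\otimes_H\mathrm{id}_C)\,t^*_\sigma(A_{1\sigma},\dots,A_{n\sigma})=0,$$ where $\sigma_\pi\in S_{m_1+\cdots+m_n}$ is the permutation with $\sigma_\pi\big((\Delta^{(m_{1\sigma})}\otimes\cdots\otimes\Delta^{(m_{n\sigma})})(F)\big)=(\Delta^{(m_1)}\otimes\cdots\otimes\Delta^{(m_n)})(\sigma(F))$ for all $F\in H^{\otimes n}$, i.e. $\sigma_\pi$ permutes the consecutive blocks of tensor factors (the $k$-th block having length $m_{k\sigma}$) by moving the $k$-th block to block position $k\sigma$, preserving order within blocks.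
   Context: $\Bbbk$ is a field of characteristic $0$, $H=\Bbbk[D]$ with Hopf structure $\Delta(D)=D\otimes1+1\otimes D$, $\varepsilon(D)=0$, $S(D)=-D$; iterated coproduct $\Delta^{(1)}=\mathrm{id}$, $\Delta^{(k+1)}=(\mathrm{id}\otimes\Delta^{(k)})\Delta$; $H$ acts on $H^{\otimes n}$ from the right by $(f_1\otimes\cdots\otimes f_n)h=f_1h_{(1)}\otimes\cdots\otimes f_nh_{(n)}$ and $H^{\otimes n}\otimes_H M$ is taken w.r.t. this action. A conformal algebra is a unital left $H$-module $C$ with bilinear operations $a_{(n)}b$ ($n\ge0$) such that $a_{(n)}b=0$ for $n\gg0$, $(Da)_{(n)}b=-na_{(n-1)}b$, $a_{(n)}(Db)=D(a_{(n)}b)+na_{(n-1)}b$. Pseudoproduct $a*b=\sum_{s\ge0}\frac{(-D)^s}{s!}\otimes1\otimes_H(a_{(s)}b)$; expanded pseudoproduct: if $a*b=\sum_i f_i\otimes g_i\otimes_H c_i$ then $(F\otimes_H a)*(G\otimes_H b)=\sum_iF\Delta^{(n)}(f_i)\otimes G\Delta^{(m)}(g_i)\otimes_H c_i$ for $F\in H^{\otimes n},G\in H^{\otimes m}$. For a bracketing $t$ and arguments $B_i\in H^{\otimes m_i}\otimes_HC$, $t^*(B_1,\dots,B_n)$ is obtained by replacing each product by the expanded pseudoproduct (elements $a\in C$ are regarded as $1\otimes_Ha$). $i\sigma$ denotes the image of $i$ under $\sigma$; for a permutation $\tau$ of tensor factors, $\tau\otimes_H\mathrm{id}_C$ is the induced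 map, where $\sigma\in S_n$ acts on $H^{\otimes n}$ by sending the $k$-th factor to position $k\sigma$. *)

theory Defs
  imports Main HOL.Vector_Spaces "HOL-Combinatorics.Permutations"
begin

text \<open>
  H = k[D].  An element of H^{\<otimes>N} is identified with a polynomial in
  x_1..x_N (D^{e_1}\<otimes>...\<otimes>D^{e_N} corresponds to x^e); the right H-action is
  F h = F(x) h(x_1+...+x_N).  A representative of an element of H^{\<otimes>N} \<otimes>_H C is a finite
  formal sum of terms (e, c), e an exponent list of length N and c in C, meaning
  the sum of x^e \<otimes> c (scalars of k are absorbed into c).
\<close>

type_synonym 'c tsum = "(nat list \<times> 'c) list"

text \<open>Conformal algebra: a k-vector space C (scale sc) with linear D, and
  k-bilinear products pr n a b = a_(n) b, local and sesquilinear.\<close>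
definition conformal_algebra ::
  "('k::field_char_0 \<Rightarrow> 'c::ab_group_add \<Rightarrow> 'c) \<Rightarrow> ('c \<Rightarrow> 'c) \<Rightarrow> (nat \<Rightarrow> 'c \<Rightarrow> 'c \<Rightarrow> 'c) \<Rightarrow> bool"
where
  "conformal_algebra sc Dc pr \<longleftrightarrow>
     vector_space sc \<and> module_hom sc sc Dc \<and>
     (\<forall>n a. module_hom sc sc (pr n a)) \<and>
     (\<forall>n b. module_hom sc sc (\<lambda>a. pr n a b)) \<and>
     (\<forall>a b. \<exists>N. \<forall>n\<ge>N. pr n a b = 0) \<and>
     (\<forall>n a b. pr n (Dc a) b = - sc (of_nat n) (pr (n - 1) a b)) \<and>
     (\<forall>n a b. pr n a (Dc b) = Dc (pr n a b) + sc (of_nat n) (pr (n - 1) a b))"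

text \<open>Coefficient function of a formal sum (its value in H^{\<otimes>N} \<otimes>_k C).\<close>
definition coefs :: "'c::ab_group_add tsum \<Rightarrow> nat list \<Rightarrow> 'c" where
  "coefs T e = sum_list (map snd (filter (\<lambda>p. fst p = e) T))"

text \<open>L(P) = (x_1+...+x_N) P - D P; its range is exactly the kernel of
  H^{\<otimes>N} \<otimes>_k C \<rightarrow> H^{\<otimes>N} \<otimes>_H C.\<close>
definition Lmap :: "('c::ab_group_add \<Rightarrow> 'c) \<Rightarrow> 'c tsum \<Rightarrow> 'c tsum" where
  "Lmap Dc P = [(e[i := e ! i + 1], c). (e, c) \<leftarrow> P, i \<leftarrow> [0..<length e]]
              @ [(e, - Dc c). (e, c) \<leftarrow> P]"

definition zero_q :: "('c::ab_group_add \<Rightarrow> 'c) \<Rightarrow> (nat list \<Rightarrow> 'c) \<Rightarrow> bool" where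
  "zero_q Dc F \<longleftrightarrow> (\<exists>P. F = coefs (Lmap Dc P))"

text \<open>Monomials of (x_1+...+x_n)^s x^e, n = length e (with multiplicity).\<close>
fun sumpow :: "nat \<Rightarrow> nat list \<Rightarrow> nat list list" where
  "sumpow 0 e = [e]"
| "sumpow (Suc s) e = [f[i := f ! i + 1]. f \<leftarrow> sumpow s e, i \<leftarrow> [0..<length e]]"

definition bnd :: "(nat \<Rightarrow> 'c::zero \<Rightarrow> 'c \<Rightarrow> 'c) \<Rightarrow> 'c \<Rightarrow> 'c \<Rightarrow> nat" where
  "bnd pr a b = (LEAST N. \<forall>s\<ge>N. pr s a b = 0)"

text \<open>Expanded pseudoproduct:
  (F \<otimes>_H a) * (G \<otimes>_H b) = sum_s F \<Delta>^{(n)}((-D)^s/s!) \<otimes> G \<otimes>_H a_(s) b.\<close>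
definition pp :: "('k::field_char_0 \<Rightarrow> 'c::ab_group_add \<Rightarrow> 'c) \<Rightarrow> (nat \<Rightarrow> 'c \<Rightarrow> 'c \<Rightarrow> 'c)
    \<Rightarrow> 'c tsum \<Rightarrow> 'c tsum \<Rightarrow> 'c tsum" where
  "pp sc pr T U = [(f @ e2, sc ((- 1) ^ s / fact s) (pr s a b)).
      (e1, a) \<leftarrow> T, (e2, b) \<leftarrow> U, s \<leftarrow> [0..<bnd pr a b], f \<leftarrow> sumpow s e1]"

text \<open>Bracketings (binary trees); leaves are filled in left to right.\<close>
datatype brk = Lf | Nd brk brk

fun leaves :: "brk \<Rightarrow> nat" where
  "leaves Lf = 1"
| "leaves (Nd l r) = leaves l + leaves r"

fun ev :: "('k::field_char_0 \<Rightarrow> 'c::ab_group_add \<Rightarrow> 'c) \<Rightarrow> (nat \<Rightarrow> 'c \<Rightarrow> 'c \<Rightarrow> 'c)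
    \<Rightarrow> brk \<Rightarrow> 'c tsum list \<Rightarrow> 'c tsum" where
  "ev sc pr Lf Bs = hd Bs"
| "ev sc pr (Nd l r) Bs =
     pp sc pr (ev sc pr l (take (leaves l) Bs)) (ev sc pr r (drop (leaves l) Bs))"

definition tstar :: "('k::field_char_0 \<Rightarrow> 'c::ab_group_add \<Rightarrow> 'c) \<Rightarrow> (nat \<Rightarrow> 'c \<Rightarrow> 'c \<Rightarrow> 'c)
    \<Rightarrow> ('k \<times> brk) list \<Rightarrow> 'c tsum list \<Rightarrow> 'c tsum" where
  "tstar sc pr lc Bs = [(e, sc r c). (r, \<tau>) \<leftarrow> lc, (e, c) \<leftarrow> ev sc pr \<tau> Bs]"

text \<open>Permutation of tensor factors (0-indexed): the k-th factor goes to position \<sigma> k.\<close>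
definition perm_list :: "(nat \<Rightarrow> nat) \<Rightarrow> nat list \<Rightarrow> nat list" where
  "perm_list \<sigma> e = map (\<lambda>j. e ! inv \<sigma> j) [0..<length e]"

fun blocks :: "nat list \<Rightarrow> 'a list \<Rightarrow> 'a list list" where
  "blocks [] xs = []"
| "blocks (l # ls) xs = take l xs # blocks ls (drop l xs)"

text \<open>\<sigma>_\<pi>: source blocks have lengths m(\<sigma> 0),...,m(\<sigma>(n-1)); block k moves to block
  position \<sigma> k (order inside blocks preserved).\<close>
definition sigma_pi :: "(nat \<Rightarrow> nat) \<Rightarrow> (nat \<Rightarrow> nat) \<Rightarrow> nat \<Rightarrow> nat list \<Rightarrow> nat list" where
  "sigma_pi \<sigma> m n e =
     concat (map (\<lambda>j. blocks (map (\<lambda>k. m (\<sigma> k)) [0..<n]) e ! inv \<sigma> j) [0..<n])"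

definition act :: "(nat list \<Rightarrow> nat list) \<Rightarrow> 'c tsum \<Rightarrow> 'c tsum" where
  "act p T = map (\<lambda>(e, c). (p e, c)) T"

text \<open>G \<otimes>_H a for G in H^{\<otimes>m} given as a list of (exponent, scalar) pairs.\<close>
definition lift :: "('k \<Rightarrow> 'c \<Rightarrow> 'c) \<Rightarrow> (nat list \<times> 'k) list \<Rightarrow> 'c \<Rightarrow> 'c tsum" where
  "lift sc G a = map (\<lambda>(e, r). (e, sc r a)) G"

end

theory Submission
  imports Defs "HOL-Library.Multiset"
begin

text \<open>
  Let \<Phi> be the k-linear map H^{\<otimes>n} \<otimes> C \<rightarrow> H^{\<otimes>M} \<otimes> C, M = m_1 + ... + m_n, given by
  F \<otimes> c \<mapsto> ((\<Delta>^{(m_1)} \<otimes> ... \<otimes> \<Delta>^{(m_n)})(F) \<cdot> (G_1 \<otimes> ... \<otimes> G_n)) \<otimes> c.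
  Since D is primitive and \<Delta> is coassociative, \<Phi> is right H-linear, so it descends to
  H^{\<otimes>n} \<otimes>_H C and preserves zero. Since the \<Delta>^{(m)} are algebra maps, \<Phi> commutes with the
  expanded pseudoproduct; as it sends 1 \<otimes>_H a_k to A_k, induction on bracketings gives
  \<Phi>(t^*(a_1, ..., a_n)) = t^*(A_1, ..., A_n). Finally, \<Phi> intertwines the permutation \<sigma> of the
  n tensor factors with the block permutation \<sigma>_\<pi>, after permuting the G_k accordingly.
  Applying \<Phi> to the pseudo-identity for a_1, ..., a_n therefore gives the claim.
\<close>

lemma sum_list_commute:
  fixes f :: "'a \<Rightarrow> 'b \<Rightarrow> 'm::comm_monoid_add"
  shows "(\<Sum>x\<leftarrow>xs. \<Sum>y\<leftarrow>ys. f x y) = (\<Sum>y\<leftarrow>ys. \<Sum>x\<leftarrow>xs. f x y)"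
  by (induction xs) (simp_all add: sum_list_addf)

lemma sum_list_cong: "(\<And>x. x \<in> set xs \<Longrightarrow> f x = g x) \<Longrightarrow> (\<Sum>x\<leftarrow>xs. f x) = (\<Sum>x\<leftarrow>xs. g x)"
  by (simp cong: map_cong)

lemma sum_list_case_prod_addf:
  fixes f g :: "'a \<Rightarrow> 'b \<Rightarrow> 'm::comm_monoid_add"
  shows "(\<Sum>(x, y)\<leftarrow>xs. f x y + g x y) = (\<Sum>(x, y)\<leftarrow>xs. f x y) + (\<Sum>(x, y)\<leftarrow>xs. g x y)"
  by (induction xs) (auto simp: algebra_simps)

lemma sum_list_concat_map:
  "(\<Sum>x\<leftarrow>concat (map f xs). g x) = (\<Sum>y\<leftarrow>xs. \<Sum>x\<leftarrow>f y. g x)"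
  by (induction xs) auto

lemma sum_list_upt_add:
  fixes g :: "nat \<Rightarrow> 'm::comm_monoid_add"
  shows "(\<Sum>i\<leftarrow>[0..<a + b]. g i) = (\<Sum>i\<leftarrow>[0..<a]. g i) + (\<Sum>j\<leftarrow>[0..<b]. g (a + j))"
  by (induction b) (simp_all add: add.assoc)

lemma sum_list_mset_cong:
  fixes f :: "'a \<Rightarrow> 'm::comm_monoid_add"
  assumes "mset xs = mset ys"
  shows "(\<Sum>x\<leftarrow>xs. f x) = (\<Sum>x\<leftarrow>ys. f x)"
proof -
  have "(\<Sum>x\<leftarrow>xs. f x) = sum_mset (mset (map f xs))"
    by (rule sum_mset_sum_list[symmetric])
  also have "\<dots> = sum_mset (mset (map f ys))"
    using assms by simp
  finally show ?thesis
    by (simp only: sum_mset_sum_list)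
qed

lemma mset_concat_map: "mset (concat (map f xs)) = (\<Sum>x\<leftarrow>xs. mset (f x))"
  by (induction xs) auto

lemma mset_eq_sum_list: "mset xs = (\<Sum>x\<leftarrow>xs. {#x#})"
  by (induction xs) auto

lemma count_image_mset_inj_on:
  "inj_on f (insert x (set_mset M)) \<Longrightarrow> count (image_mset f M) (f x) = count M x"
  by (induction M) (auto simp: inj_on_def)

lemma count_mset_product_lists:
  "count (mset (product_lists Ls)) xs =
     (if length xs = length Ls then \<Prod>i<length Ls. count (mset (Ls ! i)) (xs ! i) else 0)"
proof (induction Ls arbitrary: xs)
  case Nil
  then show ?case by (cases xs) auto
next
  case (Cons L Ls)
  have count_Cons: "count (image_mset (Cons x) M) (y # ys) = (if x = y then count M ys else 0)"
    for x y ys M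
    by (induction M) auto
  have "count (mset (concat (map (\<lambda>x. map (Cons x) P) L))) (y # ys)
      = count (mset L) y * count (mset P) ys"
    for P :: "'a list list" and y ys
    by (induction L) (auto simp: count_Cons)
  moreover have "count (mset (concat (map (\<lambda>x. map (Cons x) P) L))) [] = 0" for P :: "'a list list"
    by (auto simp: count_eq_zero_iff)
  ultimately show ?case
    using Cons.IH by (cases xs) (auto simp: prod.lessThan_Suc_shift simp del: prod.lessThan_Suc)
qed

lemma inj_on_permute_list:
  assumes \<pi>: "\<pi> permutes {..<n}"
  shows "inj_on (permute_list \<pi>) {xs. length xs = n}"
proof (rule inj_onI)
  fix u v
  assume u: "u \<in> {xs. length xs = n}" and v: "v \<in> {xs. length xs = n}"
    and eq: "permute_list \<pi> u = permute_list \<pi> v"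
  have "u ! \<pi> j = v ! \<pi> j" if "j < n" for j
    using arg_cong[OF eq, of "\<lambda>xs. xs ! j"] u v that \<pi> by (simp add: permute_list_nth)
  then have "u ! i = v ! i" if "i < n" for i
    using that permutes_inverses(1)[OF \<pi>, of i] permutes_in_image[OF permutes_inv[OF \<pi>], of i]
    by (metis lessThan_iff)
  then show "u = v"
    using u v by (simp add: nth_equalityI)
qed

lemma mset_product_lists_permute_list:
  assumes \<pi>: "\<pi> permutes {..<length Ls}"
  shows "mset (product_lists (permute_list \<pi> Ls))
       = image_mset (permute_list \<pi>) (mset (product_lists Ls))"
proof (rule multiset_eqI)
  fix ys
  let ?n = "length Ls"
  show "count (mset (product_lists (permute_list \<pi> Ls))) ys
      = count (image_mset (permute_list \<pi>) (mset (product_lists Ls))) ys"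
  proof (cases "length ys = ?n")
    case False
    then show ?thesis
      by (auto simp: count_mset_product_lists count_eq_zero_iff dest: in_set_product_lists_length)
  next
    case True
    define xs where "xs = permute_list (inv \<pi>) ys"
    have "permute_list \<pi> xs = permute_list (inv \<pi> \<circ> \<pi>) ys"
      unfolding xs_def by (rule permute_list_compose[symmetric]) (simp add: True \<pi>)
    then have ys: "ys = permute_list \<pi> xs"
      by (simp add: permutes_inv_o(2)[OF \<pi>])
    have "inj_on (permute_list \<pi>) (insert xs (set_mset (mset (product_lists Ls))))"
      by (rule inj_on_subset[OF inj_on_permute_list[OF \<pi>]])
        (auto simp: xs_def True dest: in_set_product_lists_length)
    then have "count (image_mset (permute_list \<pi>) (mset (product_lists Ls))) ys
        = count (mset (product_lists Ls)) xs"
      unfolding ys by (rule count_image_mset_inj_on)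
    also have "\<dots> = (\<Prod>i<?n. count (mset (Ls ! i)) (xs ! i))"
      using True by (simp add: count_mset_product_lists xs_def)
    also have "\<dots> = (\<Prod>j<?n. count (mset (Ls ! \<pi> j)) (xs ! \<pi> j))"
      by (rule prod.permute[OF \<pi>, unfolded comp_def])
    also have "\<dots> = count (mset (product_lists (permute_list \<pi> Ls))) ys"
      using True \<pi> by (simp add: count_mset_product_lists ys permute_list_nth)
    finally show ?thesis ..
  qed
qed

lemma length_blocks [simp]: "length (blocks ls xs) = length ls"
  by (induction ls arbitrary: xs) auto

lemma blocks_concat: "blocks (map length xss) (concat xss) = xss"
  by (induction xss) auto

lemma coefs_Nil [simp]: "coefs [] e = 0"
  by (simp add: coefs_def)

lemma coefs_Cons: "coefs ((e', c) # T) e = (if e' = e then c else 0) + coefs T e"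
  by (simp add: coefs_def)

lemma coefs_append [simp]: "coefs (T @ U) e = coefs T e + coefs U e"
  by (simp add: coefs_def)

lemma coefs_single_add: "coefs [(f, u + v)] e = coefs [(f, u)] e + coefs [(f, v)] e"
  by (simp add: coefs_Cons)

lemma coefs_eq_sum_list: "coefs T e = (\<Sum>x\<leftarrow>T. coefs [x] e)"
  by (induction T) (auto simp: coefs_Cons)

lemma coefs_concat: "coefs (concat Ts) e = (\<Sum>T\<leftarrow>Ts. coefs T e)"
  by (induction Ts) auto

lemma coefs_mset_cong: "mset T = mset U \<Longrightarrow> coefs T e = coefs U e"
  unfolding coefs_eq_sum_list[of T] coefs_eq_sum_list[of U] by (rule sum_list_mset_cong)

lemma sum_list_additive_eq_sum_coefs:
  fixes f :: "nat list \<Rightarrow> 'c::ab_group_add \<Rightarrow> 'm::ab_group_add"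
  assumes add: "\<And>x c d. f x (c + d) = f x c + f x d"
    and S: "finite S" "fst ` set T \<subseteq> S"
  shows "(\<Sum>p\<leftarrow>T. f (fst p) (snd p)) = (\<Sum>x\<in>S. f x (coefs T x))"
proof -
  have zero: "f x 0 = 0" for x
    using add[of x 0 0] by simp
  show ?thesis
    using S(2)
  proof (induction T)
    case Nil
    then show ?case by (simp add: zero)
  next
    case (Cons p T)
    have "f x (coefs (p # T) x) = (if x = fst p then f x (snd p) else 0) + f x (coefs T x)" for x
      by (cases p) (simp add: coefs_Cons add zero)
    then have "(\<Sum>x\<in>S. f x (coefs (p # T) x)) = f (fst p) (snd p) + (\<Sum>x\<in>S. f x (coefs T x))"
      using Cons.prems S(1) by (simp add: sum.distrib)
    with Cons show ?case by simp
  qed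
qed

lemma sum_list_coefs_cong:
  fixes f :: "nat list \<Rightarrow> 'c::ab_group_add \<Rightarrow> 'm::ab_group_add"
  assumes add: "\<And>x c d. f x (c + d) = f x c + f x d"
    and eq: "\<And>e. coefs T e = coefs T' e"
  shows "(\<Sum>p\<leftarrow>T. f (fst p) (snd p)) = (\<Sum>p\<leftarrow>T'. f (fst p) (snd p))"
proof -
  let ?S = "fst ` set T \<union> fst ` set T'"
  have "(\<Sum>p\<leftarrow>T. f (fst p) (snd p)) = (\<Sum>x\<in>?S. f x (coefs T x))"
    by (rule sum_list_additive_eq_sum_coefs[OF add]) auto
  also have "\<dots> = (\<Sum>p\<leftarrow>T'. f (fst p) (snd p))"
    unfolding eq by (rule sum_list_additive_eq_sum_coefs[OF add, symmetric]) auto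
  finally show ?thesis .
qed

lemma act_eq_concat: "act p T = concat (map (\<lambda>x. act p [x]) T)"
  by (induction T) (simp_all add: act_def)

lemma act_concat: "act p (concat Ts) = concat (map (act p) Ts)"
  by (induction Ts) (simp_all add: act_def)

lemma coefs_act_cong:
  assumes "\<And>e. coefs T e = coefs T' e"
  shows "coefs (act p T) e = coefs (act p T') e"
proof -
  have eq: "coefs (act p U) e = (\<Sum>x\<leftarrow>U. coefs [(p (fst x), snd x)] e)" for U
    unfolding coefs_eq_sum_list[of "act p U"] by (simp add: act_def split_def o_def)
  show ?thesis
    unfolding eq
    by (rule sum_list_coefs_cong[where f = "\<lambda>x c. coefs [(p x, c)] e", OF coefs_single_add assms])
qed

section \<open>Multiplication by the sum of the variables\<close>

text \<open>Multiplication by x_1 + ... + x_N = \<Delta>^{(N)}(D).\<close>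

definition xsum_mult :: "(nat list \<times> 'a) list \<Rightarrow> (nat list \<times> 'a) list" where
  "xsum_mult L = [(e[i := e ! i + 1], c). (e, c) \<leftarrow> L, i \<leftarrow> [0..<length e]]"

lemma xsum_mult_Nil [simp]: "xsum_mult [] = []"
  by (simp add: xsum_mult_def)

lemma xsum_mult_append [simp]: "xsum_mult (A @ B) = xsum_mult A @ xsum_mult B"
  by (simp add: xsum_mult_def)

lemma xsum_mult_concat: "xsum_mult (concat Ls) = concat (map xsum_mult Ls)"
  by (induction Ls) simp_all

lemma sum_list_xsum_mult:
  "(\<Sum>x\<leftarrow>xsum_mult L. g x) = (\<Sum>(e, c)\<leftarrow>L. \<Sum>i\<leftarrow>[0..<length e]. g (e[i := e ! i + 1], c))"
  by (induction L) (auto simp: xsum_mult_def o_def)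

lemma mset_xsum_mult_cong: "mset A = mset B \<Longrightarrow> mset (xsum_mult A) = mset (xsum_mult B)"
  unfolding mset_eq_sum_list[of "xsum_mult _"] sum_list_xsum_mult by (rule sum_list_mset_cong)

lemma xsum_mult_map_snd:
  "xsum_mult (map (\<lambda>(f, r). (f, h r)) L) = map (\<lambda>(f, r). (f, h r)) (xsum_mult L)"
  by (induction L) (auto simp: xsum_mult_def)

lemma Lmap_eq_xsum_mult: "Lmap Dc P = xsum_mult P @ [(e, - Dc c). (e, c) \<leftarrow> P]"
  unfolding Lmap_def xsum_mult_def ..

lemma sumpow_length: "f \<in> set (sumpow s e) \<Longrightarrow> length f = length e"
  by (induction s arbitrary: f) auto

lemma xsum_mult_sumpow: "xsum_mult [(f, c). f \<leftarrow> sumpow s e] = [(f, c). f \<leftarrow> sumpow (Suc s) e]"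
  by (auto simp: xsum_mult_def map_concat o_def sumpow_length
      intro!: arg_cong[where f = concat] map_cong)

lemma xsum_mult_funpow: "(xsum_mult ^^ s) L = [(f, c). (e, c) \<leftarrow> L, f \<leftarrow> sumpow s e]"
proof (induction s)
  case 0
  show ?case by (induction L) auto
next
  case (Suc s)
  then show ?case
    by (simp add: xsum_mult_concat o_def case_prod_beta xsum_mult_sumpow)
qed

lemma length_xsum_mult_funpow:
  "(\<And>y. y \<in> set L \<Longrightarrow> length (fst y) = l) \<Longrightarrow> x \<in> set ((xsum_mult ^^ s) L) \<Longrightarrow> length (fst x) = l"
  by (auto simp: xsum_mult_funpow sumpow_length)

definition tensor :: "(nat list \<times> 'k::times) list \<Rightarrow> (nat list \<times> 'k) list
    \<Rightarrow> (nat list \<times> 'k) list" where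
  "tensor A B = [(e @ f, r * q). (e, r) \<leftarrow> A, (f, q) \<leftarrow> B]"

lemma sum_list_tensor:
  "(\<Sum>x\<leftarrow>tensor A B. g x) = (\<Sum>(e, r)\<leftarrow>A. \<Sum>(f, q)\<leftarrow>B. g (e @ f, r * q))"
  by (induction A) (auto simp: tensor_def sum_list_concat_map case_prod_beta o_def)

lemma mset_tensor: "mset (tensor A B) = (\<Sum>(e, r)\<leftarrow>A. \<Sum>(f, q)\<leftarrow>B. {#(e @ f, r * q)#})"
  unfolding mset_eq_sum_list[of "tensor A B"] sum_list_tensor ..

lemma mset_tensor_cong_left: "mset A = mset A' \<Longrightarrow> mset (tensor A B) = mset (tensor A' B)"
  unfolding mset_tensor by (rule sum_list_mset_cong)

lemma mset_tensor_cong_right: "mset B = mset B' \<Longrightarrow> mset (tensor A B) = mset (tensor A B')"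
  unfolding mset_tensor by (simp only: sum_list_mset_cong[of B B'])

lemma tensor_concat_left: "tensor (concat As) B = concat (map (\<lambda>A. tensor A B) As)"
  by (induction As) (simp_all add: tensor_def)

lemma mset_tensor_concat_right:
  "mset (concat (map (\<lambda>i. tensor A (B i)) is)) = mset (tensor A (concat (map B is)))"
  unfolding mset_concat_map mset_tensor sum_list_concat_map split_def
  by (rule sum_list_commute)

lemma tensor_Nil_right [simp]: "tensor A [] = []"
  by (simp add: tensor_def)

lemma tensor_assoc:
  fixes A :: "(nat list \<times> 'k::semigroup_mult) list"
  shows "tensor (tensor A B) C = tensor A (tensor B C)"
  by (induction A) (auto simp: tensor_def map_concat o_def mult.assoc split_def)

lemma tensor_unit_left [simp]:
  fixes B :: "(nat list \<times> 'k::monoid_mult) list"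
  shows "tensor [([], 1)] B = B"
  by (induction B) (auto simp: tensor_def)

lemma tensor_unit_right [simp]:
  fixes A :: "(nat list \<times> 'k::monoid_mult) list"
  shows "tensor A [([], 1)] = A"
  by (induction A) (auto simp: tensor_def)

lemma mset_xsum_mult_tensor:
  "mset (xsum_mult (tensor A B)) = mset (tensor (xsum_mult A) B) + mset (tensor A (xsum_mult B))"
proof -
  have split: "(\<Sum>i\<leftarrow>[0..<length (e @ f)]. {#((e @ f)[i := (e @ f) ! i + 1], c)#})
      = (\<Sum>i\<leftarrow>[0..<length e]. {#(e[i := e ! i + 1] @ f, c)#})
      + (\<Sum>j\<leftarrow>[0..<length f]. {#(e @ f[j := f ! j + 1], c)#})" for e f :: "nat list" and c
  proof -
    have "(\<Sum>i\<leftarrow>[0..<length e]. {#((e @ f)[i := (e @ f) ! i + 1], c)#})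
        = (\<Sum>i\<leftarrow>[0..<length e]. {#(e[i := e ! i + 1] @ f, c)#})"
      by (rule sum_list_cong) (simp add: list_update_append1 nth_append)
    moreover have "(e @ f)[length e + j := (e @ f) ! (length e + j) + 1] = e @ f[j := f ! j + 1]"
      for j
      by (simp add: list_update_append nth_append)
    ultimately show ?thesis
      unfolding length_append sum_list_upt_add by (simp only:)
  qed
  have "mset (xsum_mult (tensor A B)) = (\<Sum>(e, r)\<leftarrow>A. \<Sum>(f, q)\<leftarrow>B.
      \<Sum>i\<leftarrow>[0..<length (e @ f)]. {#((e @ f)[i := (e @ f) ! i + 1], r * q)#})"
    unfolding mset_eq_sum_list sum_list_xsum_mult sum_list_tensor by (simp only: prod.case)
  also have "\<dots> = (\<Sum>(e, r)\<leftarrow>A. \<Sum>(f, q)\<leftarrow>B. \<Sum>i\<leftarrow>[0..<length e]. {#(e[i := e ! i + 1] @ f, r * q)#})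
      + (\<Sum>(e, r)\<leftarrow>A. \<Sum>(f, q)\<leftarrow>B. \<Sum>j\<leftarrow>[0..<length f]. {#(e @ f[j := f ! j + 1], r * q)#})"
    by (simp only: split sum_list_case_prod_addf)
  also have "\<dots> = mset (tensor (xsum_mult A) B) + mset (tensor A (xsum_mult B))"
    unfolding mset_eq_sum_list sum_list_xsum_mult sum_list_tensor
    by (simp only: split_def fst_conv snd_conv sum_list_commute[where ys = B])
  finally show ?thesis .
qed

definition tensor_list :: "(nat list \<times> 'k::comm_monoid_mult) list list \<Rightarrow> (nat list \<times> 'k) list" where
  "tensor_list Ls = [(concat (map fst ch), prod_list (map snd ch)). ch \<leftarrow> product_lists Ls]"

lemma tensor_list_Nil [simp]: "tensor_list [] = [([], 1)]"
  by (simp add: tensor_list_def)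

lemma tensor_list_Cons [simp]: "tensor_list (A # Ls) = tensor A (tensor_list Ls)"
  by (simp add: tensor_list_def tensor_def map_concat o_def split_def)

lemma mset_tensor_list_permute_list:
  assumes \<pi>: "\<pi> permutes {..<length Ls}"
    and len: "\<And>k x. k < length Ls \<Longrightarrow> x \<in> set (Ls ! k) \<Longrightarrow> length (fst x) = l k"
  shows "mset (tensor_list (permute_list \<pi> Ls))
       = image_mset (\<lambda>(e, r). (concat (permute_list \<pi> (blocks (map l [0..<length Ls]) e)), r))
           (mset (tensor_list Ls))"
proof -
  define F :: "(nat list \<times> 'a) list \<Rightarrow> nat list \<times> 'a"
    where "F = (\<lambda>ch. (concat (map fst ch), prod_list (map snd ch)))"
  let ?perm = "\<lambda>(e, r). (concat (permute_list \<pi> (blocks (map l [0..<length Ls]) e)), r)"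
  have F_perm: "F (permute_list \<pi> ch) = ?perm (F ch)" if ch: "ch \<in> set (product_lists Ls)" for ch
  proof -
    have lch: "length ch = length Ls"
      using ch by (rule in_set_product_lists_length)
    have "list_all2 (\<lambda>x ys. x \<in> set ys) ch Ls"
      using ch by (simp add: product_lists_set)
    then have "length (fst (ch ! k)) = l k" if "k < length Ls" for k
      using len[OF that] list_all2_nthD[of "\<lambda>x ys. x \<in> set ys" ch Ls k] that lch by simp
    then have "map l [0..<length Ls] = map length (map fst ch)"
      using lch by (auto intro!: nth_equalityI)
    then have "blocks (map l [0..<length Ls]) (concat (map fst ch)) = map fst ch"
      by (simp only: blocks_concat)
    moreover have "prod_list (map snd (permute_list \<pi> ch)) = prod_list (map snd ch)"
      using \<pi> lch by (simp flip: prod_mset_prod_list permute_list_map)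
    ultimately show ?thesis
      using \<pi> lch by (simp add: F_def permute_list_map)
  qed
  have "mset (tensor_list (permute_list \<pi> Ls))
      = image_mset F (mset (product_lists (permute_list \<pi> Ls)))"
    by (simp add: tensor_list_def F_def)
  also have "\<dots> = image_mset (F \<circ> permute_list \<pi>) (mset (product_lists Ls))"
    by (simp add: mset_product_lists_permute_list[OF \<pi>] image_mset.compositionality)
  also have "\<dots> = image_mset (?perm \<circ> F) (mset (product_lists Ls))"
    by (rule image_mset_cong) (simp add: F_perm)
  also have "\<dots> = image_mset ?perm (mset (tensor_list Ls))"
    by (simp add: tensor_list_def F_def image_mset.compositionality)
  finally show ?thesis .
qed

section \<open>The block coproduct map\<close>

text \<open>\<open>block_delta Gs e\<close> is (\<Delta>^{(m_1)} \<otimes> ... \<otimes> \<Delta>^{(m_n)})(x^e) \<cdot> (G_1 \<otimes> ... \<otimes> G_n), where m_k is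
  the exponent length of G_k; it is set to zero on exponent lists of the wrong length.\<close>

definition block_delta :: "(nat list \<times> 'k::comm_monoid_mult) list list
    \<Rightarrow> nat list \<Rightarrow> (nat list \<times> 'k) list" where
  "block_delta Gs e =
     (if length e = length Gs then tensor_list (map2 (\<lambda>G s. (xsum_mult ^^ s) G) Gs e) else [])"

lemma block_delta_Nil [simp]: "block_delta [] [] = [([], 1)]"
  by (simp add: block_delta_def)

lemma block_delta_Cons [simp]:
  "block_delta (G # Gs) (s # e) = tensor ((xsum_mult ^^ s) G) (block_delta Gs e)"
  by (simp add: block_delta_def)

lemma block_delta_length_neq: "length e \<noteq> length Gs \<Longrightarrow> block_delta Gs e = []"
  by (simp add: block_delta_def)

lemma block_delta_append:
  "length e1 = length Gs1 \<Longrightarrow>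
   block_delta (Gs1 @ Gs2) (e1 @ e2) = tensor (block_delta Gs1 e1) (block_delta Gs2 e2)"
  by (induction Gs1 arbitrary: e1) (auto simp: length_Suc_conv tensor_assoc)

text \<open>The block map is H-linear: D is primitive and \<Delta> coassociative, so the image of
  x_1 + ... + x_n is the sum of the variables of all blocks.\<close>

lemma mset_block_delta_xsum_mult:
  "mset (concat (map (\<lambda>i. block_delta Gs (e[i := e ! i + 1])) [0..<length e]))
     = mset (xsum_mult (block_delta Gs e))"
proof (induction Gs arbitrary: e)
  case Nil
  then show ?case by (cases "e = []") (simp_all add: block_delta_def xsum_mult_def)
next
  case (Cons G Gs)
  show ?case
  proof (cases e)
    case Nil
    then show ?thesis by (simp add: block_delta_length_neq)
  next
    case (Cons s e')
    let ?P = "(xsum_mult ^^ s) G"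
    have "mset (concat (map (\<lambda>i. block_delta (G # Gs) (e[i := e ! i + 1])) [0..<length e]))
        = mset (tensor (xsum_mult ?P) (block_delta Gs e'))
          + mset (concat (map (\<lambda>i. tensor ?P (block_delta Gs (e'[i := e' ! i + 1])))
              [0..<length e']))"
      by (simp add: Cons upt_conv_Cons map_Suc_upt[symmetric] o_def del: upt_Suc)
    also have "\<dots> = mset (tensor (xsum_mult ?P) (block_delta Gs e'))
        + mset (tensor ?P (xsum_mult (block_delta Gs e')))"
      by (simp only: mset_tensor_concat_right mset_tensor_cong_right[OF Cons.IH])
    also have "\<dots> = mset (xsum_mult (block_delta (G # Gs) e))"
      by (simp add: Cons mset_xsum_mult_tensor)
    finally show ?thesis .
  qed
qed

lemma mset_block_delta_sumpow:
  "mset (concat (map (block_delta Gs) (sumpow s e))) = mset ((xsum_mult ^^ s) (block_delta Gs e))"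
proof (induction s)
  case 0
  then show ?case by simp
next
  case (Suc s)
  have "mset (concat (map (block_delta Gs) (sumpow (Suc s) e)))
      = (\<Sum>f\<leftarrow>sumpow s e.
          mset (concat (map (\<lambda>i. block_delta Gs (f[i := f ! i + 1])) [0..<length f])))"
    by (auto simp: mset_concat_map sum_list_concat_map o_def
        intro!: sum_list_cong dest: sumpow_length)
  also have "\<dots> = mset (xsum_mult (concat (map (block_delta Gs) (sumpow s e))))"
    unfolding mset_block_delta_xsum_mult
    by (simp only: xsum_mult_concat mset_concat_map map_map o_def)
  also have "\<dots> = mset ((xsum_mult ^^ Suc s) (block_delta Gs e))"
    using mset_xsum_mult_cong[OF Suc.IH] by simp
  finally show ?case .
qed

lemma mset_block_delta_sumpow_append:
  assumes "length e1 = length Gs1"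
  shows "mset (concat (map (\<lambda>f. block_delta (Gs1 @ Gs2) (f @ e2)) (sumpow s e1)))
       = mset (tensor ((xsum_mult ^^ s) (block_delta Gs1 e1)) (block_delta Gs2 e2))"
proof -
  have "concat (map (\<lambda>f. block_delta (Gs1 @ Gs2) (f @ e2)) (sumpow s e1))
      = concat (map (\<lambda>f. tensor (block_delta Gs1 f) (block_delta Gs2 e2)) (sumpow s e1))"
    using assms by (auto simp: block_delta_append sumpow_length intro!: arg_cong[where f = concat])
  also have "\<dots> = tensor (concat (map (block_delta Gs1) (sumpow s e1))) (block_delta Gs2 e2)"
    by (simp add: tensor_concat_left o_def)
  finally show ?thesis
    by (simp only: mset_tensor_cong_left[OF mset_block_delta_sumpow])
qed

lemma sigma_pi_eq_permute_list:
  "sigma_pi \<sigma> m n e = concat (permute_list (inv \<sigma>) (blocks (map (\<lambda>k. m (\<sigma> k)) [0..<n]) e))"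
  by (simp add: sigma_pi_def permute_list_def)

lemma mset_block_delta_perm_list:
  assumes \<sigma>: "\<sigma> permutes {0..<n}" and len: "length e = n"
    and G: "\<forall>k<n. \<forall>(g, r) \<in> set (G k). length g = m k"
  shows "mset (block_delta (map G [0..<n]) (perm_list \<sigma> e))
       = image_mset (\<lambda>(f, r). (sigma_pi \<sigma> m n f, r))
           (mset (block_delta (map (\<lambda>k. G (\<sigma> k)) [0..<n]) e))"
proof -
  define Ls where "Ls = map (\<lambda>k. (xsum_mult ^^ (e ! k)) (G (\<sigma> k))) [0..<n]"
  have \<pi>: "inv \<sigma> permutes {..<length Ls}"
    using permutes_inv[OF \<sigma>] by (simp add: Ls_def atLeast0LessThan)
  have in_range: "\<sigma> k < n" "inv \<sigma> k < n" if "k < n" for k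
    using that permutes_in_image[OF \<sigma>] permutes_in_image[OF permutes_inv[OF \<sigma>]] by auto
  have Ls_len: "length (fst x) = m (\<sigma> k)" if "k < length Ls" "x \<in> set (Ls ! k)" for k x
  proof -
    from that have k: "k < n" and x: "x \<in> set ((xsum_mult ^^ (e ! k)) (G (\<sigma> k)))"
      by (simp_all add: Ls_def)
    have "length (fst y) = m (\<sigma> k)" if "y \<in> set (G (\<sigma> k))" for y
      using G in_range(1)[OF k] that by (cases y) auto
    then show ?thesis
      using x by (rule length_xsum_mult_funpow)
  qed
  have "block_delta (map (\<lambda>k. G (\<sigma> k)) [0..<n]) e = tensor_list Ls"
    using len
    by (auto simp: block_delta_def Ls_def intro!: arg_cong[where f = tensor_list] nth_equalityI)
  moreover have "map2 (\<lambda>G s. (xsum_mult ^^ s) G) (map G [0..<n]) (perm_list \<sigma> e)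
      = permute_list (inv \<sigma>) Ls"
    using in_range(2) \<pi>
    by (auto simp: Ls_def perm_list_def permute_list_nth permutes_inverses(1)[OF \<sigma>] len
        intro!: nth_equalityI)
  then have "block_delta (map G [0..<n]) (perm_list \<sigma> e) = tensor_list (permute_list (inv \<sigma>) Ls)"
    by (simp add: block_delta_def perm_list_def len)
  ultimately show ?thesis
    using mset_tensor_list_permute_list[OF \<pi> Ls_len]
    by (simp add: sigma_pi_eq_permute_list Ls_def)
qed

text \<open>The block map tensored with C, the scalars of the G_k acting on C. It sends 1 \<otimes>_H a_k
  to G_k \<otimes>_H a_k.\<close>

definition block_expand :: "('k \<Rightarrow> 'c \<Rightarrow> 'c) \<Rightarrow> (nat list \<times> 'k::comm_monoid_mult) list list
    \<Rightarrow> 'c tsum \<Rightarrow> 'c tsum" where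
  "block_expand sc Gs T = [(f, sc r c). (e, c) \<leftarrow> T, (f, r) \<leftarrow> block_delta Gs e]"

lemma block_expand_single:
  "block_expand sc Gs [(e, c)] = map (\<lambda>(f, r). (f, sc r c)) (block_delta Gs e)"
  by (simp add: block_expand_def)

lemma block_expand_eq_concat: "block_expand sc Gs T = concat (map (\<lambda>p. block_expand sc Gs [p]) T)"
  by (simp add: block_expand_def split_def)

lemma block_expand_append [simp]:
  "block_expand sc Gs (T @ U) = block_expand sc Gs T @ block_expand sc Gs U"
  by (simp add: block_expand_def)

lemma block_expand_concat: "block_expand sc Gs (concat Ts) = concat (map (block_expand sc Gs) Ts)"
  by (induction Ts) (simp_all add: block_expand_def)

lemma sum_list_block_expand:
  "(\<Sum>x\<leftarrow>block_expand sc Gs T. g x) = (\<Sum>(e, c)\<leftarrow>T. \<Sum>(f, r)\<leftarrow>block_delta Gs e. g (f, sc r c))"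
  by (simp add: block_expand_def sum_list_concat_map split_def o_def)

lemma mset_block_expand_xsum_mult_single:
  "mset (block_expand sc Gs (xsum_mult [(e, c)])) = mset (xsum_mult (block_expand sc Gs [(e, c)]))"
proof -
  let ?h = "\<lambda>(f, r). (f, sc r c)"
  have "block_expand sc Gs (xsum_mult [(e, c)])
      = map ?h (concat (map (\<lambda>i. block_delta Gs (e[i := e ! i + 1])) [0..<length e]))"
    by (simp add: xsum_mult_def block_expand_def map_concat o_def)
  then show ?thesis
    by (simp only: mset_map mset_block_delta_xsum_mult block_expand_single xsum_mult_map_snd)
qed

lemma mset_block_expand_xsum_mult:
  "mset (block_expand sc Gs (xsum_mult P)) = mset (xsum_mult (block_expand sc Gs P))"
proof -
  have "xsum_mult P = concat (map (\<lambda>p. xsum_mult [p]) P)"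
    by (induction P) (simp_all add: xsum_mult_def)
  then have "mset (block_expand sc Gs (xsum_mult P))
      = (\<Sum>p\<leftarrow>P. mset (block_expand sc Gs (xsum_mult [p])))"
    by (simp add: block_expand_concat mset_concat_map o_def)
  also have "\<dots> = (\<Sum>p\<leftarrow>P. mset (xsum_mult (block_expand sc Gs [p])))"
    by (rule sum_list_cong) (metis mset_block_expand_xsum_mult_single prod.collapse)
  also have "\<dots> = mset (xsum_mult (block_expand sc Gs P))"
    by (subst (2) block_expand_eq_concat) (simp add: xsum_mult_concat mset_concat_map o_def)
  finally show ?thesis .
qed

lemma mset_block_expand_act_perm_list:
  assumes \<sigma>: "\<sigma> permutes {0..<n}" and len: "\<forall>x\<in>set T. length (fst x) = n"
    and G: "\<forall>k<n. \<forall>(g, r) \<in> set (G k). length g = m k"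
  shows "mset (block_expand sc (map G [0..<n]) (act (perm_list \<sigma>) T))
       = mset (act (sigma_pi \<sigma> m n) (block_expand sc (map (\<lambda>k. G (\<sigma> k)) [0..<n]) T))"
proof -
  have single: "mset (block_expand sc (map G [0..<n]) (act (perm_list \<sigma>) [x]))
      = mset (act (sigma_pi \<sigma> m n) (block_expand sc (map (\<lambda>k. G (\<sigma> k)) [0..<n]) [x]))"
    if "x \<in> set T" for x
  proof -
    obtain e c where x: "x = (e, c)"
      by fastforce
    have "length e = n"
      using that len x by auto
    then show ?thesis
      using mset_block_delta_perm_list[OF \<sigma> _ G]
      by (simp add: x act_def block_expand_single image_mset.compositionality case_prod_beta o_def)
  qed
  have "mset (block_expand sc (map G [0..<n]) (act (perm_list \<sigma>) T))
      = (\<Sum>x\<leftarrow>T. mset (block_expand sc (map G [0..<n]) (act (perm_list \<sigma>) [x])))"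
    by (subst act_eq_concat) (simp add: block_expand_concat mset_concat_map o_def)
  also have "\<dots> = (\<Sum>x\<leftarrow>T.
      mset (act (sigma_pi \<sigma> m n) (block_expand sc (map (\<lambda>k. G (\<sigma> k)) [0..<n]) [x])))"
    by (rule sum_list_cong) (rule single)
  also have "\<dots> = mset (act (sigma_pi \<sigma> m n) (block_expand sc (map (\<lambda>k. G (\<sigma> k)) [0..<n]) T))"
    by (subst (2) block_expand_eq_concat) (simp add: act_concat mset_concat_map o_def)
  finally show ?thesis .
qed

section \<open>Pseudoproducts and bracketings of formal sums\<close>

text \<open>The locality bound \<open>bnd pr a b\<close> is neither additive nor homogeneous in a and b, so
  linearity of the pseudoproduct is proved through a common larger bound.\<close>

definition pp_upto :: "('k::field_char_0 \<Rightarrow> 'c::ab_group_add \<Rightarrow> 'c) \<Rightarrow> (nat \<Rightarrow> 'c \<Rightarrow> 'c \<Rightarrow> 'c)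
    \<Rightarrow> nat \<Rightarrow> nat list \<Rightarrow> 'c \<Rightarrow> nat list \<Rightarrow> 'c \<Rightarrow> 'c tsum" where
  "pp_upto sc pr N e1 a e2 b =
     [(f @ e2, sc ((- 1) ^ s / fact s) (pr s a b)). s \<leftarrow> [0..<N], f \<leftarrow> sumpow s e1]"

lemma pp_single: "pp sc pr [(e1, a)] [(e2, b)] = pp_upto sc pr (bnd pr a b) e1 a e2 b"
  by (simp add: pp_def pp_upto_def)

lemma pp_eq_concat: "pp sc pr T U = concat (map (\<lambda>p. concat (map (\<lambda>q. pp sc pr [p] [q]) U)) T)"
  by (simp add: pp_def split_def)

lemma coefs_pp: "coefs (pp sc pr T U) e = (\<Sum>p\<leftarrow>T. \<Sum>q\<leftarrow>U. coefs (pp sc pr [p] [q]) e)"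
  by (simp add: pp_eq_concat[of _ _ T U] coefs_concat o_def)

lemma coefs_pp_concat:
  "coefs (pp sc pr (concat (map F xs)) (concat (map G ys))) e
     = (\<Sum>x\<leftarrow>xs. \<Sum>y\<leftarrow>ys. coefs (pp sc pr (F x) (G y)) e)"
proof -
  have "coefs (pp sc pr (concat (map F xs)) (concat (map G ys))) e
      = (\<Sum>x\<leftarrow>xs. \<Sum>p\<leftarrow>F x. \<Sum>y\<leftarrow>ys. \<Sum>q\<leftarrow>G y. coefs (pp sc pr [p] [q]) e)"
    unfolding coefs_pp[of _ _ "concat (map F xs)"] sum_list_concat_map ..
  also have "\<dots> = (\<Sum>x\<leftarrow>xs. \<Sum>y\<leftarrow>ys. \<Sum>p\<leftarrow>F x. \<Sum>q\<leftarrow>G y. coefs (pp sc pr [p] [q]) e)"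
    by (rule sum_list_cong, rule sum_list_commute)
  finally show ?thesis
    by (simp only: coefs_pp[of _ _ "F _" "G _"])
qed

lemma length_pp:
  assumes "\<forall>x\<in>set T. length (fst x) = k" and "\<forall>x\<in>set U. length (fst x) = l"
    and "x \<in> set (pp sc pr T U)"
  shows "length (fst x) = k + l"
  using assms by (fastforce simp: pp_def sumpow_length)

lemma length_ev:
  assumes "leaves \<tau> = length Bs" and "\<forall>B\<in>set Bs. \<forall>x\<in>set B. length (fst x) = 1"
    and "x \<in> set (ev sc pr \<tau> Bs)"
  shows "length (fst x) = leaves \<tau>"
  using assms
proof (induction \<tau> arbitrary: Bs x)
  case Lf
  then show ?case by (cases Bs) auto
next
  case (Nd l r)
  have "\<forall>B\<in>set (take (leaves l) Bs). \<forall>x\<in>set B. length (fst x) = 1"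
    and "\<forall>B\<in>set (drop (leaves l) Bs). \<forall>x\<in>set B. length (fst x) = 1"
    using Nd.prems(2) by (meson in_set_takeD, meson in_set_dropD)
  then have "\<forall>y\<in>set (ev sc pr l (take (leaves l) Bs)). length (fst y) = leaves l"
    and "\<forall>y\<in>set (ev sc pr r (drop (leaves l) Bs)). length (fst y) = leaves r"
    using Nd.prems(1) Nd.IH(1)[of "take (leaves l) Bs"] Nd.IH(2)[of "drop (leaves l) Bs"] by auto
  then show ?case
    using Nd.prems(3) by (auto dest: length_pp)
qed

lemma tstar_eq_concat:
  "tstar sc pr lc Bs
     = concat (map (\<lambda>x. map (\<lambda>y. (fst y, sc (fst x) (snd y))) (ev sc pr (snd x) Bs)) lc)"
  by (simp add: tstar_def split_def)

lemma length_tstar: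
  assumes "\<forall>(r, \<tau>)\<in>set lc. leaves \<tau> = length Bs" and "\<forall>B\<in>set Bs. \<forall>x\<in>set B. length (fst x) = 1"
    and "x \<in> set (tstar sc pr lc Bs)"
  shows "length (fst x) = length Bs"
  using assms length_ev[of _ Bs] by (fastforce simp: tstar_def)

locale conformal =
  fixes sc :: "'k::field_char_0 \<Rightarrow> 'c::ab_group_add \<Rightarrow> 'c" and Dc :: "'c \<Rightarrow> 'c"
    and pr :: "nat \<Rightarrow> 'c \<Rightarrow> 'c \<Rightarrow> 'c"
  assumes conformal: "conformal_algebra sc Dc pr"
begin

lemma module_sc: "module sc"
  using conformal module_iff_vector_space by (auto simp: conformal_algebra_def)

lemma scale_add: "sc r (x + y) = sc r x + sc r y"
  by (rule module.scale_right_distrib[OF module_sc])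

lemma scale_scale: "sc r (sc q x) = sc (r * q) x"
  by (rule module.scale_scale[OF module_sc])

lemma scale_zero: "sc r 0 = 0"
  by (rule module.scale_zero_right[OF module_sc])

lemma scale_minus: "sc r (- x) = - sc r x"
  by (rule module.scale_minus_right[OF module_sc])

lemma scale_sum_list: "sc r (\<Sum>x\<leftarrow>xs. f x) = (\<Sum>x\<leftarrow>xs. sc r (f x))"
  by (induction xs) (simp_all add: scale_zero scale_add)

lemma coefs_scale: "coefs [(f, sc r c)] e = sc r (coefs [(f, c)] e)"
  by (simp add: coefs_Cons scale_zero)

lemma D_scale: "Dc (sc r x) = sc r (Dc x)"
  using conformal by (simp add: conformal_algebra_def module_hom_iff)

lemma pr_add_left: "pr s (x + y) b = pr s x b + pr s y b"
  and pr_scale_left: "pr s (sc r x) b = sc r (pr s x b)"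
  and pr_add_right: "pr s a (x + y) = pr s a x + pr s a y"
  and pr_scale_right: "pr s a (sc r x) = sc r (pr s a x)"
  using conformal by (simp_all add: conformal_algebra_def module_hom_iff)

lemma pr_bnd: "bnd pr a b \<le> s \<Longrightarrow> pr s a b = 0"
proof -
  have "\<exists>N. \<forall>s\<ge>N. pr s a b = 0"
    using conformal by (simp add: conformal_algebra_def)
  then have "\<forall>s\<ge>bnd pr a b. pr s a b = 0"
    unfolding bnd_def by (rule LeastI_ex)
  then show "bnd pr a b \<le> s \<Longrightarrow> pr s a b = 0" by simp
qed

lemma bnd_le: "(\<And>s. N \<le> s \<Longrightarrow> pr s a b = 0) \<Longrightarrow> bnd pr a b \<le> N"
  unfolding bnd_def by (rule Least_le) simp

lemma coefs_pp_upto: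
  "coefs (pp_upto sc pr N e1 a e2 b) e
     = (\<Sum>s\<leftarrow>[0..<N]. \<Sum>f\<leftarrow>sumpow s e1. sc ((- 1) ^ s / fact s) (coefs [(f @ e2, pr s a b)] e))"
  unfolding pp_upto_def coefs_eq_sum_list[of "concat _"] sum_list_concat_map
  by (simp only: map_map o_def coefs_scale)

lemma coefs_pp_upto_bnd:
  assumes "bnd pr a b \<le> N"
  shows "coefs (pp_upto sc pr N e1 a e2 b) e = coefs (pp sc pr [(e1, a)] [(e2, b)]) e"
proof -
  obtain k where N: "N = bnd pr a b + k"
    using assms le_Suc_ex by blast
  have "(\<Sum>s\<leftarrow>[bnd pr a b..<N]. \<Sum>f\<leftarrow>sumpow s e1.
          sc ((- 1) ^ s / fact s) (coefs [(f @ e2, pr s a b)] e))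
      = (\<Sum>s\<leftarrow>[bnd pr a b..<N]. 0)"
    by (rule sum_list_cong) (simp add: pr_bnd coefs_Cons scale_zero)
  then show ?thesis
    unfolding pp_single coefs_pp_upto N upt_add_eq_append[OF le0] by (simp add: N)
qed

lemma coefs_pp_add_left:
  "coefs (pp sc pr [(e1, x + y)] [(e2, b)]) e
     = coefs (pp sc pr [(e1, x)] [(e2, b)]) e + coefs (pp sc pr [(e1, y)] [(e2, b)]) e"
proof -
  let ?N = "bnd pr (x + y) b + bnd pr x b + bnd pr y b"
  have "coefs (pp_upto sc pr ?N e1 (x + y) e2 b) e
      = coefs (pp_upto sc pr ?N e1 x e2 b) e + coefs (pp_upto sc pr ?N e1 y e2 b) e"
    by (simp only: coefs_pp_upto pr_add_left coefs_single_add scale_add sum_list_addf)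
  then show ?thesis
    by (simp only: coefs_pp_upto_bnd le_add1 le_add2 trans_le_add1)
qed

lemma coefs_pp_add_right:
  "coefs (pp sc pr [(e1, a)] [(e2, x + y)]) e
     = coefs (pp sc pr [(e1, a)] [(e2, x)]) e + coefs (pp sc pr [(e1, a)] [(e2, y)]) e"
proof -
  let ?N = "bnd pr a (x + y) + bnd pr a x + bnd pr a y"
  have "coefs (pp_upto sc pr ?N e1 a e2 (x + y)) e
      = coefs (pp_upto sc pr ?N e1 a e2 x) e + coefs (pp_upto sc pr ?N e1 a e2 y) e"
    by (simp only: coefs_pp_upto pr_add_right coefs_single_add scale_add sum_list_addf)
  then show ?thesis
    by (simp only: coefs_pp_upto_bnd le_add1 le_add2 trans_le_add1)
qed

lemma coefs_pp_scale:
  "coefs (pp sc pr [(e1, sc r a)] [(e2, sc q b)]) e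
     = sc (r * q) (coefs (pp sc pr [(e1, a)] [(e2, b)]) e)"
proof -
  have "bnd pr (sc r a) (sc q b) \<le> bnd pr a b"
    by (rule bnd_le) (simp add: pr_scale_left pr_scale_right pr_bnd scale_zero)
  then have "coefs (pp sc pr [(e1, sc r a)] [(e2, sc q b)]) e
      = coefs (pp_upto sc pr (bnd pr a b) e1 (sc r a) e2 (sc q b)) e"
    by (simp only: coefs_pp_upto_bnd)
  then show ?thesis
    by (simp add: pp_single coefs_pp_upto pr_scale_left pr_scale_right coefs_scale scale_scale
        scale_sum_list mult_ac)
qed

lemma coefs_pp_cong:
  assumes T: "\<And>e. coefs T e = coefs T' e" and U: "\<And>e. coefs U e = coefs U' e"
  shows "coefs (pp sc pr T U) e = coefs (pp sc pr T' U') e"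
proof -
  let ?c = "\<lambda>p q. coefs (pp sc pr [(fst p, snd p)] [(fst q, snd q)]) e"
  have "(\<Sum>p\<leftarrow>T. \<Sum>q\<leftarrow>U. ?c p q) = (\<Sum>p\<leftarrow>T'. \<Sum>q\<leftarrow>U. ?c p q)"
    by (rule sum_list_coefs_cong[OF _ T]) (simp only: coefs_pp_add_left sum_list_addf)
  also have "\<dots> = (\<Sum>q\<leftarrow>U. \<Sum>p\<leftarrow>T'. ?c p q)"
    by (rule sum_list_commute)
  also have "\<dots> = (\<Sum>q\<leftarrow>U'. \<Sum>p\<leftarrow>T'. ?c p q)"
    by (rule sum_list_coefs_cong[OF _ U])
      (simp only: fst_conv snd_conv coefs_pp_add_right sum_list_addf)
  finally have "(\<Sum>p\<leftarrow>T. \<Sum>q\<leftarrow>U. coefs (pp sc pr [p] [q]) e)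
      = (\<Sum>q\<leftarrow>U'. \<Sum>p\<leftarrow>T'. coefs (pp sc pr [p] [q]) e)"
    by (simp only: prod.collapse)
  then show ?thesis
    unfolding coefs_pp[of _ _ T U] coefs_pp[of _ _ T' U'] by (simp only: sum_list_commute[of _ T'])
qed

lemma coefs_block_expand_cong:
  assumes "\<And>e. coefs T e = coefs T' e"
  shows "coefs (block_expand sc Gs T) e = coefs (block_expand sc Gs T') e"
proof -
  have eq: "coefs (block_expand sc Gs U) e
      = (\<Sum>x\<leftarrow>U. \<Sum>q\<leftarrow>block_delta Gs (fst x). coefs [(fst q, sc (snd q) (snd x))] e)" for U
    unfolding coefs_eq_sum_list[of "block_expand sc Gs U"] sum_list_block_expand
    by (simp add: split_def)
  show ?thesis
    unfolding eq
    by (rule sum_list_coefs_cong[OF _ assms,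
          where f = "\<lambda>x c. \<Sum>q\<leftarrow>block_delta Gs x. coefs [(fst q, sc (snd q) c)] e"])
      (simp only: scale_add coefs_single_add sum_list_addf)
qed

lemma mset_block_expand_Lmap:
  "mset (block_expand sc Gs (Lmap Dc P)) = mset (Lmap Dc (block_expand sc Gs P))"
proof -
  have "block_expand sc Gs [(e, - Dc c). (e, c) \<leftarrow> P] = [(f, - Dc c). (f, c) \<leftarrow> block_expand sc Gs P]"
    by (simp add: block_expand_def map_concat o_def split_def D_scale scale_minus)
  then show ?thesis
    by (simp add: Lmap_eq_xsum_mult mset_block_expand_xsum_mult)
qed

lemma coefs_pp_block_expand_single:
  assumes len: "length e1 = length Gs1"
  shows "coefs (pp sc pr (block_expand sc Gs1 [(e1, a)]) (block_expand sc Gs2 [(e2, b)])) e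
       = coefs (block_expand sc (Gs1 @ Gs2) (pp sc pr [(e1, a)] [(e2, b)])) e"
proof -
  define c where "c s = sc ((- 1) ^ s / fact s) (pr s a b)" for s
  let ?N = "bnd pr a b" and ?B1 = "block_delta Gs1 e1" and ?B2 = "block_delta Gs2 e2"
  let ?X = "\<lambda>s f q1 q2. coefs [(f @ fst q2, sc (snd q1 * snd q2) (c s))] e"
  have "coefs (pp sc pr (block_expand sc Gs1 [(e1, a)]) (block_expand sc Gs2 [(e2, b)])) e
      = (\<Sum>q1\<leftarrow>?B1. \<Sum>q2\<leftarrow>?B2. sc (snd q1 * snd q2) (coefs (pp sc pr [(fst q1, a)] [(fst q2, b)]) e))"
    unfolding coefs_pp[of _ _ "block_expand sc Gs1 [(e1, a)]"]
    by (simp add: block_expand_single coefs_pp_scale split_def o_def)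
  also have "\<dots> = (\<Sum>q1\<leftarrow>?B1. \<Sum>q2\<leftarrow>?B2. \<Sum>s\<leftarrow>[0..<?N]. \<Sum>f\<leftarrow>sumpow s (fst q1). ?X s f q1 q2)"
    by (simp add: pp_single coefs_pp_upto scale_sum_list coefs_scale c_def del: sum_list_upt)
  also have "\<dots> = (\<Sum>q1\<leftarrow>?B1. \<Sum>s\<leftarrow>[0..<?N]. \<Sum>q2\<leftarrow>?B2. \<Sum>f\<leftarrow>sumpow s (fst q1). ?X s f q1 q2)"
    by (rule sum_list_cong, rule sum_list_commute)
  also have "\<dots> = (\<Sum>s\<leftarrow>[0..<?N]. \<Sum>q1\<leftarrow>?B1. \<Sum>q2\<leftarrow>?B2. \<Sum>f\<leftarrow>sumpow s (fst q1). ?X s f q1 q2)"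
    by (rule sum_list_commute)
  also have "\<dots> = (\<Sum>s\<leftarrow>[0..<?N]. \<Sum>q1\<leftarrow>?B1. \<Sum>f\<leftarrow>sumpow s (fst q1). \<Sum>q2\<leftarrow>?B2. ?X s f q1 q2)"
    by (rule sum_list_cong, rule sum_list_cong, rule sum_list_commute)
  also have "\<dots> = (\<Sum>s\<leftarrow>[0..<?N].
      \<Sum>x\<leftarrow>tensor ((xsum_mult ^^ s) ?B1) ?B2. coefs [(fst x, sc (snd x) (c s))] e)"
    by (simp add: sum_list_tensor xsum_mult_funpow sum_list_concat_map split_def o_def
        del: sum_list_upt)
  also have "\<dots> = (\<Sum>s\<leftarrow>[0..<?N].
      \<Sum>x\<leftarrow>concat (map (\<lambda>f. block_delta (Gs1 @ Gs2) (f @ e2)) (sumpow s e1)).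
        coefs [(fst x, sc (snd x) (c s))] e)"
    by (rule sum_list_cong,
        rule sum_list_mset_cong[OF mset_block_delta_sumpow_append[OF len, symmetric]])
  also have "\<dots> = coefs (block_expand sc (Gs1 @ Gs2) (pp sc pr [(e1, a)] [(e2, b)])) e"
    unfolding coefs_eq_sum_list[of "block_expand _ _ _"] sum_list_block_expand
    by (simp add: pp_single pp_upto_def sum_list_concat_map split_def o_def c_def del: sum_list_upt)
  finally show ?thesis .
qed

lemma coefs_pp_block_expand:
  assumes "\<forall>x\<in>set T. length (fst x) = length Gs1"
  shows "coefs (pp sc pr (block_expand sc Gs1 T) (block_expand sc Gs2 U)) e
       = coefs (block_expand sc (Gs1 @ Gs2) (pp sc pr T U)) e"
proof -
  have "coefs (pp sc pr (block_expand sc Gs1 T) (block_expand sc Gs2 U)) e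
      = (\<Sum>p\<leftarrow>T. \<Sum>q\<leftarrow>U. coefs (pp sc pr (block_expand sc Gs1 [(fst p, snd p)])
          (block_expand sc Gs2 [(fst q, snd q)])) e)"
    by (subst (1 2) block_expand_eq_concat) (simp add: coefs_pp_concat)
  also have "\<dots> = (\<Sum>p\<leftarrow>T. \<Sum>q\<leftarrow>U.
      coefs (block_expand sc (Gs1 @ Gs2) (pp sc pr [(fst p, snd p)] [(fst q, snd q)])) e)"
    using assms by (intro sum_list_cong coefs_pp_block_expand_single) simp
  also have "\<dots> = coefs (block_expand sc (Gs1 @ Gs2) (pp sc pr T U)) e"
    by (simp add: pp_eq_concat[of _ _ T U] block_expand_concat coefs_concat o_def)
  finally show ?thesis .
qed

lemma coefs_ev_lift:
  assumes "leaves \<tau> = length Ls"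
  shows "coefs (ev sc pr \<tau> (map (\<lambda>(G, a). lift sc G a) Ls)) e
       = coefs (block_expand sc (map fst Ls) (ev sc pr \<tau> (map (\<lambda>(G, a). [([0], a)]) Ls))) e"
  using assms
proof (induction \<tau> arbitrary: Ls e)
  case Lf
  then obtain G a where "Ls = [(G, a)]"
    by (cases Ls) auto
  then show ?case
    by (simp add: block_expand_single lift_def)
next
  case (Nd l r)
  let ?units = "\<lambda>Ls. map (\<lambda>(G, a). [([0], a)]) Ls"
  let ?L1 = "take (leaves l) Ls" and ?L2 = "drop (leaves l) Ls"
  have lengths: "\<forall>x\<in>set (ev sc pr l (?units ?L1)). length (fst x) = length (map fst ?L1)"
  proof
    fix x
    assume "x \<in> set (ev sc pr l (?units ?L1))"
    then have "length (fst x) = leaves l"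
      by (rule length_ev[rotated 2]) (use Nd.prems in auto)
    then show "length (fst x) = length (map fst ?L1)"
      using Nd.prems by simp
  qed
  have "coefs (ev sc pr (Nd l r) (map (\<lambda>(G, a). lift sc G a) Ls)) e
      = coefs (pp sc pr (ev sc pr l (map (\<lambda>(G, a). lift sc G a) ?L1))
                        (ev sc pr r (map (\<lambda>(G, a). lift sc G a) ?L2))) e"
    by (simp add: take_map drop_map)
  also have "\<dots> = coefs (pp sc pr (block_expand sc (map fst ?L1) (ev sc pr l (?units ?L1)))
                        (block_expand sc (map fst ?L2) (ev sc pr r (?units ?L2)))) e"
    by (rule coefs_pp_cong) (use Nd in auto)
  also have "\<dots> = coefs (block_expand sc (map fst Ls) (ev sc pr (Nd l r) (?units Ls))) e"
    unfolding coefs_pp_block_expand[OF lengths] map_append[symmetric] append_take_drop_id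
    by (simp add: take_map drop_map)
  finally show ?case .
qed

lemma coefs_scale_tsum: "coefs (map (\<lambda>y. (fst y, sc r (snd y))) T) e = sc r (coefs T e)"
  by (induction T) (auto simp: coefs_Cons scale_add scale_zero)

lemma block_expand_scale_tsum:
  "block_expand sc Gs (map (\<lambda>y. (fst y, sc r (snd y))) T)
     = map (\<lambda>y. (fst y, sc r (snd y))) (block_expand sc Gs T)"
  by (simp add: block_expand_def map_concat o_def split_def scale_scale mult.commute)

lemma coefs_tstar:
  "coefs (tstar sc pr lc Bs) e = (\<Sum>x\<leftarrow>lc. sc (fst x) (coefs (ev sc pr (snd x) Bs) e))"
  by (simp add: tstar_eq_concat coefs_concat o_def coefs_scale_tsum)

lemma coefs_block_expand_tstar:
  "coefs (block_expand sc Gs (tstar sc pr lc Bs)) e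
     = (\<Sum>x\<leftarrow>lc. sc (fst x) (coefs (block_expand sc Gs (ev sc pr (snd x) Bs)) e))"
  by (simp add: tstar_eq_concat block_expand_concat coefs_concat o_def
      block_expand_scale_tsum coefs_scale_tsum)

lemma coefs_tstar_lift:
  assumes "\<forall>(r, \<tau>)\<in>set lc. leaves \<tau> = length Ls"
  shows "coefs (tstar sc pr lc (map (\<lambda>(G, a). lift sc G a) Ls)) e
       = coefs (block_expand sc (map fst Ls) (tstar sc pr lc (map (\<lambda>(G, a). [([0], a)]) Ls))) e"
  unfolding coefs_tstar coefs_block_expand_tstar
  by (rule sum_list_cong) (use assms coefs_ev_lift in auto)

lemma coefs_block_expand_perm_tstar:
  assumes \<sigma>: "\<sigma> permutes {0..<n}" and leaves: "\<forall>(r, \<tau>)\<in>set lc. leaves \<tau> = n"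
    and G: "\<forall>k<n. \<forall>(g, r)\<in>set (G k). length g = m k"
  shows "coefs (block_expand sc (map G [0..<n])
             (act (perm_list \<sigma>) (tstar sc pr lc (map (\<lambda>k. [([0], a (\<sigma> k))]) [0..<n])))) e
       = coefs (act (sigma_pi \<sigma> m n)
           (tstar sc pr lc (map (\<lambda>k. lift sc (G (\<sigma> k)) (a (\<sigma> k))) [0..<n]))) e"
proof -
  define Ls where "Ls = map (\<lambda>k. (G (\<sigma> k), a (\<sigma> k))) [0..<n]"
  let ?T = "tstar sc pr lc (map (\<lambda>k. [([0], a (\<sigma> k))]) [0..<n])"
  have len: "\<forall>x\<in>set ?T. length (fst x) = n"
    using length_tstar[of lc "map (\<lambda>k. [([0], a (\<sigma> k))]) [0..<n]"] leaves by auto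
  have "coefs (block_expand sc (map G [0..<n]) (act (perm_list \<sigma>) ?T)) e
      = coefs (act (sigma_pi \<sigma> m n) (block_expand sc (map (\<lambda>k. G (\<sigma> k)) [0..<n]) ?T)) e"
    by (rule coefs_mset_cong[OF mset_block_expand_act_perm_list[OF \<sigma> len G]])
  also have "\<dots> = coefs (act (sigma_pi \<sigma> m n) (tstar sc pr lc (map (\<lambda>(G, a). lift sc G a) Ls))) e"
    using coefs_tstar_lift[of lc Ls] leaves
    by (intro coefs_act_cong) (simp add: Ls_def o_def)
  finally show ?thesis
    by (simp add: Ls_def o_def)
qed

lemma zero_q_block_expand_sum:
  assumes "finite S" and "zero_q Dc (\<lambda>e. \<Sum>\<sigma>\<in>S. coefs (X \<sigma>) e)"
  shows "zero_q Dc (\<lambda>e. \<Sum>\<sigma>\<in>S. coefs (block_expand sc Gs (X \<sigma>)) e)"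
proof -
  obtain P where "(\<lambda>e. \<Sum>\<sigma>\<in>S. coefs (X \<sigma>) e) = coefs (Lmap Dc P)"
    using assms(2) unfolding zero_q_def by blast
  then have P: "(\<Sum>\<sigma>\<in>S. coefs (X \<sigma>) e) = coefs (Lmap Dc P) e" for e
    by (rule fun_cong)
  obtain xs where xs: "set xs = S" "distinct xs"
    using finite_distinct_list[OF assms(1)] by blast
  have sum_eq: "(\<Sum>\<sigma>\<in>S. coefs (Y \<sigma>) e) = coefs (concat (map Y xs)) e" for Y e
    using sum.distinct_set_conv_list[OF xs(2)] xs(1) by (simp add: coefs_concat o_def)
  have "(\<Sum>\<sigma>\<in>S. coefs (block_expand sc Gs (X \<sigma>)) e)
      = coefs (block_expand sc Gs (concat (map X xs))) e" for e
    by (simp add: sum_eq block_expand_concat o_def)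
  also have "coefs (block_expand sc Gs (concat (map X xs))) e
      = coefs (block_expand sc Gs (Lmap Dc P)) e" for e
    by (rule coefs_block_expand_cong) (simp flip: sum_eq P)
  also have "coefs (block_expand sc Gs (Lmap Dc P)) e
      = coefs (Lmap Dc (block_expand sc Gs P)) e" for e
    by (rule coefs_mset_cong[OF mset_block_expand_Lmap])
  finally show ?thesis
    unfolding zero_q_def by blast
qed

end

theorem proposition3p3:
  fixes sc :: "'k::field_char_0 \<Rightarrow> 'c::ab_group_add \<Rightarrow> 'c"
    and Dc :: "'c \<Rightarrow> 'c" and pr :: "nat \<Rightarrow> 'c \<Rightarrow> 'c \<Rightarrow> 'c"
    and n :: nat and t :: "(nat \<Rightarrow> nat) \<Rightarrow> ('k \<times> brk) list"
    and m :: "nat \<Rightarrow> nat" and G :: "nat \<Rightarrow> (nat list \<times> 'k) list" and a :: "nat \<Rightarrow> 'c"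
  assumes "conformal_algebra sc Dc pr"
    and "\<forall>\<sigma>. \<sigma> permutes {0..<n} \<longrightarrow> (\<forall>(r, \<tau>) \<in> set (t \<sigma>). leaves \<tau> = n)"
    and "\<forall>b :: nat \<Rightarrow> 'c. zero_q Dc (\<lambda>e. \<Sum>\<sigma> \<in> {\<sigma>. \<sigma> permutes {0..<n}}.
           coefs (act (perm_list \<sigma>)
             (tstar sc pr (t \<sigma>) (map (\<lambda>k. [([0], b (\<sigma> k))]) [0..<n]))) e)"
    and "\<forall>k<n. 0 < m k"
    and "\<forall>k<n. \<forall>(e, r) \<in> set (G k). length e = m k"
  shows "zero_q Dc (\<lambda>e. \<Sum>\<sigma> \<in> {\<sigma>. \<sigma> permutes {0..<n}}.
           coefs (act (sigma_pi \<sigma> m n)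
             (tstar sc pr (t \<sigma>) (map (\<lambda>k. lift sc (G (\<sigma> k)) (a (\<sigma> k))) [0..<n]))) e)"
proof -
  interpret conformal sc Dc pr
    by (rule conformal.intro) (rule assms(1))
  let ?S = "{\<sigma>. \<sigma> permutes {0..<n}}"
  have "zero_q Dc (\<lambda>e. \<Sum>\<sigma>\<in>?S. coefs (block_expand sc (map G [0..<n])
      (act (perm_list \<sigma>) (tstar sc pr (t \<sigma>) (map (\<lambda>k. [([0], a (\<sigma> k))]) [0..<n])))) e)"
    by (rule zero_q_block_expand_sum) (simp_all add: finite_permutations assms(3))
  moreover have "(\<Sum>\<sigma>\<in>?S. coefs (block_expand sc (map G [0..<n])
      (act (perm_list \<sigma>) (tstar sc pr (t \<sigma>) (map (\<lambda>k. [([0], a (\<sigma> k))]) [0..<n])))) e)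
    = (\<Sum>\<sigma>\<in>?S. coefs (act (sigma_pi \<sigma> m n)
      (tstar sc pr (t \<sigma>) (map (\<lambda>k. lift sc (G (\<sigma> k)) (a (\<sigma> k))) [0..<n]))) e)" for e
    using assms(2,5) by (intro sum.cong refl coefs_block_expand_perm_tstar) auto
  ultimately show ?thesis
    by simp
qed

end
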